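(* There exists an integer $a_0$ such that for every integer $a\ge a_0$ and every positive integer $k\le\log a$ (natural logarithm), with positive probability the random graph $G_{a,k}$ satisfies both: (i) $G_{a,k}$ has a fractional $2$-guidance system with maximum outdegree at most $3$, and (ii) $G_{a,k}$ does not have a weak $2$-guidance system with maximum outdegree at most $k$.
   Context: For positive integers $a,k$, let $m=k2^{k+1}$. The random graph $G_{a,k}$ is obtained as follows: take disjoint sets $L$ of size $a$ and $R$ of size $ma$, and join each vertex of $L$ to each vertex of $R$ independently with probability $1/2$ (no other edges among $L\cup R$); partition $R$ arbitrarily into $m$ parts $R_1,\dots,R_m$ of size $a$, and for each $i$ add a new vertex $x_i$ adjacent exactly to all vertices of $R_i$. A partial orientation of $G$ is a directed graph $\vec{H}$ on $V(G)$ such that every $(u,v)\in E(\vec{H})$ satisfies $uv\in E(G)$. $B_{\vec{H}}(v,a)$ is the set of vertices reachable from $v$ by a directed path of length at most $a$. A weak $r$-guidance system of $G$ is a partial orientation $\vec{H}$ such that for any distinct $u,v$ at distance $\ell\le r$ in $G$ there exist non-negative integers $a,b$ with $a+b=\ell-1$ such that $G$ has an edge between $B_{\vec{H}}(u,a)$ and $B_{\vec{H}}(v,b)$. For $u,v$ at distance $\ell$, $\Gamma_G(u,v)$ is the set of neighbors of $u$ at distance $\ell-1$ from $v$. A fractional orientation is a function $p$ assigning a non-negative real $p(u,v)$ to each ordered pair of adjacent vertices; its maximum outdegree is $\max_u\sum_{v:uv\in E(G)}p(u,v)$. A fractional $r$-guidance system is a fractional orientation $p$ such that for all $u,v$ at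 distance $\ell$ with $2\le\ell\le r$, $\sum_{y\in\Gamma_G(u,v)}p(u,y)+\sum_{y\in\Gamma_G(v,u)}p(v,y)\ge1$. *)

theory Defs
  imports "HOL-Probability.Probability"
begin

inductive walk :: "('v \<Rightarrow> 'v \<Rightarrow> bool) \<Rightarrow> nat \<Rightarrow> 'v \<Rightarrow> 'v \<Rightarrow> bool"
  for adj where
  walk_nil: "walk adj 0 u u"
| walk_step: "adj u w \<Longrightarrow> walk adj n w v \<Longrightarrow> walk adj (Suc n) u v"

definition dist_is :: "('v \<Rightarrow> 'v \<Rightarrow> bool) \<Rightarrow> 'v \<Rightarrow> 'v \<Rightarrow> nat \<Rightarrow> bool" where
  "dist_is adj u v l \<longleftrightarrow> walk adj l u v \<and> (\<forall>n<l. \<not> walk adj n u v)"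

definition partial_orientation :: "'v set \<Rightarrow> ('v \<Rightarrow> 'v \<Rightarrow> bool) \<Rightarrow> ('v \<times> 'v) set \<Rightarrow> bool" where
  "partial_orientation V adj H \<longleftrightarrow> H \<subseteq> {(u,v). u \<in> V \<and> v \<in> V \<and> adj u v}"

definition max_outdeg_le :: "'v set \<Rightarrow> ('v \<times> 'v) set \<Rightarrow> nat \<Rightarrow> bool" where
  "max_outdeg_le V H k \<longleftrightarrow> (\<forall>u\<in>V. card {v. (u,v) \<in> H} \<le> k)"

definition ball_dir :: "('v \<times> 'v) set \<Rightarrow> 'v \<Rightarrow> nat \<Rightarrow> 'v set" where
  "ball_dir H v a = {w. \<exists>n\<le>a. walk (\<lambda>x y. (x,y) \<in> H) n v w}"

definition weak_guidance :: "'v set \<Rightarrow> ('v \<Rightarrow> 'v \<Rightarrow> bool) \<Rightarrow> nat \<Rightarrow> ('v \<times> 'v) set \<Rightarrow> bool" where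
  "weak_guidance V adj r H \<longleftrightarrow> partial_orientation V adj H \<and>
     (\<forall>u\<in>V. \<forall>v\<in>V. \<forall>l. u \<noteq> v \<and> dist_is adj u v l \<and> l \<le> r \<longrightarrow>
        (\<exists>a b. a + b = l - 1 \<and>
           (\<exists>x\<in>ball_dir H u a. \<exists>y\<in>ball_dir H v b. adj x y)))"

definition Gamma :: "'v set \<Rightarrow> ('v \<Rightarrow> 'v \<Rightarrow> bool) \<Rightarrow> 'v \<Rightarrow> 'v \<Rightarrow> nat \<Rightarrow> 'v set" where
  "Gamma V adj u v l = {y\<in>V. adj u y \<and> dist_is adj y v (l - 1)}"

definition frac_orientation :: "('v \<Rightarrow> 'v \<Rightarrow> bool) \<Rightarrow> ('v \<Rightarrow> 'v \<Rightarrow> real) \<Rightarrow> bool" where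
  "frac_orientation adj p \<longleftrightarrow> (\<forall>u v. adj u v \<longrightarrow> p u v \<ge> 0)"

definition frac_max_outdeg_le :: "'v set \<Rightarrow> ('v \<Rightarrow> 'v \<Rightarrow> bool) \<Rightarrow> ('v \<Rightarrow> 'v \<Rightarrow> real) \<Rightarrow> real \<Rightarrow> bool" where
  "frac_max_outdeg_le V adj p c \<longleftrightarrow> (\<forall>u\<in>V. (\<Sum>v\<in>{v\<in>V. adj u v}. p u v) \<le> c)"

definition frac_guidance :: "'v set \<Rightarrow> ('v \<Rightarrow> 'v \<Rightarrow> bool) \<Rightarrow> nat \<Rightarrow> ('v \<Rightarrow> 'v \<Rightarrow> real) \<Rightarrow> bool" where
  "frac_guidance V adj r p \<longleftrightarrow> frac_orientation adj p \<and>
     (\<forall>u\<in>V. \<forall>v\<in>V. \<forall>l. dist_is adj u v l \<and> 2 \<le> l \<and> l \<le> r \<longrightarrow>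
        (\<Sum>y\<in>Gamma V adj u v l. p u y) + (\<Sum>y\<in>Gamma V adj v u l. p v y) \<ge> 1)"

datatype vtx = Lv nat | Rv nat nat | Xv nat
  (* Rv i j : j-th vertex of part R_i;  Xv i : the vertex x_i *)

definition mval :: "nat \<Rightarrow> nat" where "mval k = k * 2 ^ (k + 1)"

definition Lset :: "nat \<Rightarrow> nat set" where "Lset a = {..<a}"
definition Rset :: "nat \<Rightarrow> nat \<Rightarrow> (nat \<times> nat) set" where
  "Rset a k = {..<mval k} \<times> {..<a}"

definition Gverts :: "nat \<Rightarrow> nat \<Rightarrow> vtx set" where
  "Gverts a k = Lv ` Lset a \<union> (\<lambda>(i,j). Rv i j) ` Rset a k \<union> Xv ` {..<mval k}"

text \<open>E is the (random) set of L--R edges, a subset of Lset a \<times> Rset a k\<close>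
fun Gadj :: "nat \<Rightarrow> nat \<Rightarrow> (nat \<times> (nat \<times> nat)) set \<Rightarrow> vtx \<Rightarrow> vtx \<Rightarrow> bool" where
  "Gadj a k E (Lv l) (Rv i j) = ((l, (i, j)) \<in> E \<and> l < a \<and> i < mval k \<and> j < a)"
| "Gadj a k E (Rv i j) (Lv l) = ((l, (i, j)) \<in> E \<and> l < a \<and> i < mval k \<and> j < a)"
| "Gadj a k E (Rv i j) (Xv q) = (i = q \<and> i < mval k \<and> j < a)"
| "Gadj a k E (Xv q) (Rv i j) = (i = q \<and> i < mval k \<and> j < a)"
| "Gadj a k E _ _ = False"

text \<open>Each L--R pair is an edge independently with probability 1/2, i.e. E is uniform
  over all subsets of Lset a \<times> Rset a k.\<close>
definition edge_dist :: "nat \<Rightarrow> nat \<Rightarrow> (nat \<times> (nat \<times> nat)) set pmf" where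
  "edge_dist a k = pmf_of_set (Pow (Lset a \<times> Rset a k))"

end

theory Submission
  imports Defs "HOL-Library.Nat_Bijection"
begin

(* Every edge set has positive probability, so it suffices to exhibit one graph with both
  properties. Let N = 2^(k+1), code the first N vertices of L and of every part R_i by the
  subsets of {0,...,k} (via set_decode), join l and r when their codes meet in an odd number of
  points, and put no further L-R edges.
  A nonempty code meets exactly half of all codes oddly, and two nonempty codes are both met
  oddly by at least a quarter of all codes. So weights 2/N on the coded neighbours (x_i towards
  R_i, the vertices of L towards R_0 only, the vertices of R towards L) together with weight 1
  from each vertex of R_i to x_i give a fractional 2-guidance system of outdegree 3.
  Conversely, at most k codes are all met evenly by some nonempty code C (each parity constraint
  at most halves the number of solutions). Applied to the out-neighbours of x_i, the vertex of L
  coded by C is at distance 2 from x_i, and a weak 2-guidance system can only serve this pair by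
  an arc from that vertex into R_i. That makes k 2^(k+1) arcs leaving the 2^(k+1) - 1 vertices
  of L with nonempty code, too many for outdegree k. *)

section \<open>Parity of intersections\<close>

lemma double_card_filter_involution:
  assumes "finite S" "\<And>x. x \<in> S \<Longrightarrow> f x \<in> S" "\<And>x. x \<in> S \<Longrightarrow> f (f x) = x"
    and "\<And>x. x \<in> S \<Longrightarrow> Q (f x) \<longleftrightarrow> \<not> Q x"
  shows "2 * card {x\<in>S. Q x} = card S"
proof -
  have "bij_betw f {x\<in>S. Q x} {x\<in>S. \<not> Q x}"
    by (rule bij_betwI[where g = f]) (use assms in auto)
  then have "card {x\<in>S. Q x} = card {x\<in>S. \<not> Q x}"
    by (rule bij_betw_same_card)
  moreover have
    "card {x\<in>S. Q x} + card {x\<in>S. \<not> Q x} = card ({x\<in>S. Q x} \<union> {x\<in>S. \<not> Q x})"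
    using assms(1) by (intro card_Un_disjoint[symmetric]) auto
  moreover have "{x\<in>S. Q x} \<union> {x\<in>S. \<not> Q x} = S" by auto
  ultimately show ?thesis by simp
qed

lemma even_card_sym_diff:
  assumes "finite A" "finite B"
  shows "even (card (sym_diff A B)) \<longleftrightarrow> (even (card A) \<longleftrightarrow> even (card B))"
proof -
  have "card (sym_diff A B) = card (A - B) + card (B - A)"
    by (rule card_Un_disjoint) (use assms in auto)
  moreover have "card A = card (A - B) + card (A \<inter> B)" "card B = card (B - A) + card (A \<inter> B)"
    using assms card_Int_Diff[of A B] card_Int_Diff[of B A] by (auto simp: Int_commute)
  ultimately show ?thesis by auto
qed

lemma even_card_sym_diff_Int:
  assumes "finite A" "finite C"
  shows "even (card (sym_diff A C \<inter> B)) \<longleftrightarrow> (even (card (A \<inter> B)) \<longleftrightarrow> even (card (C \<inter> B)))"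
proof -
  have "sym_diff A C \<inter> B = sym_diff (A \<inter> B) (C \<inter> B)" by auto
  then show ?thesis using even_card_sym_diff[of "A \<inter> B" "C \<inter> B"] assms by simp
qed

lemma even_card_toggle_Int:
  assumes "finite X" "A \<subseteq> X" "c \<in> B"
  shows "even (card (sym_diff A {c} \<inter> B)) \<longleftrightarrow> odd (card (A \<inter> B))"
  using even_card_sym_diff_Int[of A "{c}" B] assms finite_subset by auto

lemma card_Pow_odd_Int:
  assumes "finite X" "B \<subseteq> X" "c \<in> B"
  shows "2 * card {C\<in>Pow X. odd (card (C \<inter> B))} = 2 ^ card X"
proof -
  have "2 * card {C\<in>Pow X. odd (card (C \<inter> B))} = card (Pow X)"
    by (rule double_card_filter_involution[where f = "\<lambda>C. sym_diff C {c}"])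
      (use assms in \<open>auto simp: even_card_toggle_Int\<close>)
  then show ?thesis using assms(1) by (simp add: card_Pow)
qed

lemma card_Pow_odd_Int_pair_eq:
  assumes "finite X" "A \<subseteq> X" "B \<subseteq> X" "a \<in> A" "c \<in> B" "c \<notin> A"
  shows "4 * card {C\<in>Pow X. odd (card (C \<inter> A)) \<and> odd (card (C \<inter> B))} = 2 ^ card X"
proof -
  let ?S = "{C\<in>Pow X. odd (card (C \<inter> A))}"
  have "sym_diff C {c} \<inter> A = C \<inter> A" for C
    using assms(6) by auto
  then have "2 * card {C\<in>?S. odd (card (C \<inter> B))} = card ?S"
    by (intro double_card_filter_involution[where f = "\<lambda>C. sym_diff C {c}"])
      (use assms in \<open>auto simp: even_card_toggle_Int\<close>)
  moreover have "{C\<in>?S. odd (card (C \<inter> B))} =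
      {C\<in>Pow X. odd (card (C \<inter> A)) \<and> odd (card (C \<inter> B))}"
    by auto
  ultimately show ?thesis
    using card_Pow_odd_Int[OF assms(1,2,4)] by simp
qed

lemma card_Pow_odd_Int_pair:
  assumes "finite X" "A \<subseteq> X" "B \<subseteq> X" "A \<noteq> {}" "B \<noteq> {}"
  shows "2 ^ card X \<le> 4 * card {C\<in>Pow X. odd (card (C \<inter> A)) \<and> odd (card (C \<inter> B))}"
proof -
  obtain a b where a: "a \<in> A" and b: "b \<in> B" using assms(4,5) by blast
  consider "A = B" | c where "c \<in> B" "c \<notin> A" | c where "c \<in> A" "c \<notin> B"
    by blast
  then show ?thesis
  proof cases
    case 1
    then show ?thesis using card_Pow_odd_Int[OF assms(1,2) a] by simp
  next
    case 2
    then show ?thesis using card_Pow_odd_Int_pair_eq[OF assms(1-3) a] by simp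
  next
    case 3
    then show ?thesis using card_Pow_odd_Int_pair_eq[OF assms(1,3,2) b] by (simp add: conj_commute)
  qed
qed

lemma card_Pow_even_Int_all:
  assumes "finite X" "finite T"
  shows "2 ^ card X \<le> 2 ^ card T * card {C\<in>Pow X. \<forall>B\<in>T. even (card (C \<inter> B))}"
  using assms(2)
proof (induction T rule: finite_induct)
  case empty
  then show ?case using card_Pow[of X] assms(1) by (simp add: Pow_def)
next
  case (insert B T)
  let ?U = "{C\<in>Pow X. \<forall>B\<in>T. even (card (C \<inter> B))}"
  let ?U' = "{C\<in>Pow X. \<forall>B\<in>insert B T. even (card (C \<inter> B))}"
  have "card ?U \<le> 2 * card ?U'"
  proof (cases "\<exists>C0\<in>?U. odd (card (C0 \<inter> B))")
    case True
    then obtain C0 where C0: "C0 \<in> ?U" "odd (card (C0 \<inter> B))" by blast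
    have fin: "finite C" if "C \<subseteq> X" for C
      using that assms(1) finite_subset by auto
    have "2 * card {C\<in>?U. even (card (C \<inter> B))} = card ?U"
      using C0
      by (intro double_card_filter_involution[where f = "\<lambda>C. sym_diff C C0"])
        (auto simp: even_card_sym_diff_Int fin)
    moreover have "{C\<in>?U. even (card (C \<inter> B))} = ?U'" by auto
    ultimately show ?thesis by simp
  next
    case False
    then have "?U' = ?U" by auto
    then show ?thesis by simp
  qed
  then show ?case using insert by (simp add: order_trans)
qed

lemma ex_nonempty_even_Int_all:
  assumes "finite X" "finite T" "card T < card X"
  obtains C where "C \<subseteq> X" "C \<noteq> {}" "\<forall>B\<in>T. even (card (C \<inter> B))"
proof -
  let ?U = "{C\<in>Pow X. \<forall>B\<in>T. even (card (C \<inter> B))}"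
  have "\<not> ?U \<subseteq> {{}}"
  proof
    assume "?U \<subseteq> {{}}"
    then have "card ?U \<le> 1" using card_mono[of "{{}}" ?U] by simp
    then have "2 ^ card T * card ?U \<le> (2::nat) ^ card T" by simp
    then have "2 ^ card X \<le> (2::nat) ^ card T"
      using card_Pow_even_Int_all[OF assms(1,2)] by linarith
    with assms(3) show False by simp
  qed
  then show ?thesis using that by blast
qed

section \<open>Subsets of {..<n} coded by numbers\<close>

lemma set_decode_subset_lessThan: "j < 2 ^ n \<Longrightarrow> set_decode j \<subseteq> {..<n}"
proof
  fix x assume "j < 2 ^ n" "x \<in> set_decode j"
  then have "(2::nat) ^ x \<le> set_encode (set_decode j)"
    unfolding set_encode_def by (intro member_le_sum) auto
  also have "\<dots> < 2 ^ n" using \<open>j < 2 ^ n\<close> by simp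
  finally show "x \<in> {..<n}" by simp
qed

lemma set_encode_less_power: "A \<subseteq> {..<n} \<Longrightarrow> set_encode A < 2 ^ n"
proof -
  assume "A \<subseteq> {..<n}"
  then have "set_encode A \<le> (\<Sum>x<n. 2 ^ x)"
    unfolding set_encode_def by (intro sum_mono2) auto
  also have "\<dots> < 2 ^ n" by (induction n) auto
  finally show ?thesis .
qed

lemma set_decode_eq_empty_iff: "set_decode n = {} \<longleftrightarrow> n = 0"
  by (metis set_decode_inverse set_decode_zero set_encode_empty)

lemma bij_betw_set_decode: "bij_betw set_decode {..<2 ^ n} (Pow {..<n})"
proof (rule bij_betw_byWitness[where f' = set_encode])
  show "\<forall>A\<in>Pow {..<n}. set_decode (set_encode A) = A"
    using finite_subset[OF _ finite_lessThan] by auto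
qed (use set_decode_subset_lessThan set_encode_less_power in auto)

lemma card_codes: "card {j\<in>{..<2 ^ n}. Q (set_decode j)} = card {C\<in>Pow {..<n}. Q C}"
  by (rule bij_betw_same_card, rule bij_betw_Collect[OF bij_betw_set_decode]) simp

lemma card_codes_odd_Int:
  assumes "B \<subseteq> {..<n}" "c \<in> B"
  shows "2 * card {j\<in>{..<2 ^ n}. odd (card (set_decode j \<inter> B))} = 2 ^ n"
  using card_Pow_odd_Int[OF _ assms] card_codes[where Q = "\<lambda>C. odd (card (C \<inter> B))"] by simp

lemma card_codes_odd_Int_pair:
  assumes "A \<subseteq> {..<n}" "B \<subseteq> {..<n}" "A \<noteq> {}" "B \<noteq> {}"
  shows "2 ^ n \<le> 4 * card {j\<in>{..<2 ^ n}. odd (card (set_decode j \<inter> A)) \<and> odd (card (set_decode j \<inter> B))}"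
  using card_Pow_odd_Int_pair[OF _ assms]
    card_codes[where Q = "\<lambda>C. odd (card (C \<inter> A)) \<and> odd (card (C \<inter> B))"]
  by simp

section \<open>Pairs at distance two\<close>

lemma walk_0_iff: "walk adj 0 u v \<longleftrightarrow> u = v"
  by (auto elim: walk.cases intro: walk.intros)

lemma walk_Suc_iff: "walk adj (Suc n) u v \<longleftrightarrow> (\<exists>w. adj u w \<and> walk adj n w v)"
  by (auto elim: walk.cases intro: walk.intros)

lemma dist_is_2_iff:
  "dist_is adj u v 2 \<longleftrightarrow> u \<noteq> v \<and> \<not> adj u v \<and> (\<exists>w. adj u w \<and> adj w v)"
  by (auto simp: dist_is_def numeral_2_eq_2 less_Suc_eq walk_0_iff walk_Suc_iff)

lemma Gamma_2:
  assumes "\<And>x. \<not> adj x x"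
  shows "Gamma V adj u v 2 = {y\<in>V. adj u y \<and> adj y v}"
  using assms by (auto simp: Gamma_def dist_is_def less_Suc_eq walk_0_iff walk_Suc_iff)

lemma ball_dir_0: "ball_dir H v 0 = {v}"
  by (auto simp: ball_dir_def walk_0_iff)

lemma ball_dir_Suc_0: "ball_dir H v (Suc 0) = insert v {w. (v, w) \<in> H}"
  by (auto simp: ball_dir_def le_Suc_eq walk_0_iff walk_Suc_iff)

lemma weak_guidance_dist_2:
  assumes "weak_guidance V adj 2 H" "u \<in> V" "v \<in> V" "dist_is adj u v 2"
  shows "(\<exists>x. (u, x) \<in> H \<and> adj x v) \<or> (\<exists>y. (v, y) \<in> H \<and> adj u y)"
proof -
  obtain a b where "a + b = 1" "\<exists>x\<in>ball_dir H u a. \<exists>y\<in>ball_dir H v b. adj x y"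
    using assms dist_is_2_iff[of adj u v] unfolding weak_guidance_def by fastforce
  then consider "\<exists>y\<in>ball_dir H v (Suc 0). adj u y" | "\<exists>x\<in>ball_dir H u (Suc 0). adj x v"
    by (cases a) (auto simp: ball_dir_0)
  then show ?thesis
    using assms(4) by cases (auto simp: ball_dir_Suc_0 dist_is_2_iff)
qed

lemma finite_out_arcs:
  assumes "partial_orientation V adj H" "finite V"
  shows "finite {v. (u, v) \<in> H}"
  using assms by (auto simp: partial_orientation_def intro: finite_subset)

lemma card_arcs_from_le:
  assumes "partial_orientation V adj H" "finite V" "max_outdeg_le V H k" "S \<subseteq> V"
  shows "card (H \<inter> S \<times> UNIV) \<le> card S * k"
proof -
  have "H \<inter> S \<times> UNIV = (SIGMA u:S. {v. (u, v) \<in> H})" by auto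
  moreover have "finite S" using assms(2,4) finite_subset by auto
  ultimately have "card (H \<inter> S \<times> UNIV) = (\<Sum>u\<in>S. card {v. (u, v) \<in> H})"
    using finite_out_arcs[OF assms(1,2)] by simp
  also have "\<dots> \<le> card S * k"
    using assms(3,4) sum_bounded_above[of S "\<lambda>u. card {v. (u, v) \<in> H}" k]
    by (auto simp: max_outdeg_le_def)
  finally show ?thesis .
qed

section \<open>The parity instance of G_{a,k}\<close>

lemma card_mult_le_sum:
  fixes f :: "'a \<Rightarrow> real" and c :: real
  assumes "finite A" "inj_on g J" "g ` J \<subseteq> A" "\<And>y. y \<in> A \<Longrightarrow> 0 \<le> f y"
    and "\<And>j. j \<in> J \<Longrightarrow> f (g j) = c"
  shows "card J * c \<le> sum f A"
proof -
  have "card J * c = sum f (g ` J)" using assms(2,5) by (simp add: sum.reindex)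
  also have "\<dots> \<le> sum f A" by (rule sum_mono2) (use assms in auto)
  finally show ?thesis .
qed

lemma sum_le_card_mult:
  fixes f :: "'a \<Rightarrow> real" and c :: real
  assumes "finite A" "finite B" "\<And>y. y \<in> A - B \<Longrightarrow> f y = 0" "\<And>y. y \<in> A \<inter> B \<Longrightarrow> f y \<le> c"
    and "0 \<le> c"
  shows "sum f A \<le> card B * c"
proof -
  have "sum f A = sum f (A \<inter> B)"
    by (rule sum.mono_neutral_right) (use assms in auto)
  also have "\<dots> \<le> card (A \<inter> B) * c" using assms(4) by (rule sum_bounded_above)
  also have "\<dots> \<le> card B * c" using assms(2,5) by (simp add: card_mono mult_right_mono)
  finally show ?thesis .
qed

lemma Gadj_irrefl: "\<not> Gadj a k E u u"
  by (cases u) auto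

lemma Gadj_Xv_iff: "Gadj a k E (Xv i) y \<longleftrightarrow> (\<exists>j. y = Rv i j \<and> i < mval k \<and> j < a)"
  by (cases y) auto

lemma Gadj_Lv_iff:
  "Gadj a k E (Lv l) y \<longleftrightarrow>
     (\<exists>i j. y = Rv i j \<and> (l, i, j) \<in> E \<and> l < a \<and> i < mval k \<and> j < a)"
  by (cases y) auto

lemma Gverts_simps [simp]:
  "Lv l \<in> Gverts a k \<longleftrightarrow> l < a"
  "Rv i j \<in> Gverts a k \<longleftrightarrow> i < mval k \<and> j < a"
  "Xv i \<in> Gverts a k \<longleftrightarrow> i < mval k"
  by (auto simp: Gverts_def Lset_def Rset_def)

lemma finite_Gverts: "finite (Gverts a k)"
  by (simp add: Gverts_def Lset_def Rset_def)

definition ncodes :: "nat \<Rightarrow> nat" where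
  "ncodes k = 2 ^ Suc k"

definition parity_edges :: "nat \<Rightarrow> (nat \<times> (nat \<times> nat)) set" where
  "parity_edges k = {(l, (i, j)). l < ncodes k \<and> i < mval k \<and> j < ncodes k \<and>
     odd (card (set_decode l \<inter> set_decode j))}"

fun parity_weight :: "nat \<Rightarrow> vtx \<Rightarrow> vtx \<Rightarrow> real" where
  "parity_weight k (Xv i) (Rv i' j) = (if j < ncodes k then 2 / ncodes k else 0)"
| "parity_weight k (Lv l) (Rv i j) = (if i = 0 then 2 / ncodes k else 0)"
| "parity_weight k (Rv i j) (Xv i') = 1"
| "parity_weight k (Rv i j) (Lv l) = 2 / ncodes k"
| "parity_weight k _ _ = 0"

lemma mem_parity_edges [simp]:
  "(l, i, j) \<in> parity_edges k \<longleftrightarrow>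
     l < ncodes k \<and> i < mval k \<and> j < ncodes k \<and> odd (card (set_decode l \<inter> set_decode j))"
  by (simp add: parity_edges_def)

lemma parity_weight_nonneg: "0 \<le> parity_weight k u v"
  by (cases "(k, u, v)" rule: parity_weight.cases) auto

locale parity_graph =
  fixes a k :: nat
  assumes ncodes_le: "ncodes k \<le> a" and k_pos: "0 < k"
begin

abbreviation "N \<equiv> ncodes k"
abbreviation "V \<equiv> Gverts a k"
abbreviation "G \<equiv> Gadj a k (parity_edges k)"
abbreviation "p \<equiv> parity_weight k"

text \<open>For u, v at distance two, mass u v is the weight that u puts on Gamma(u, v).\<close>
abbreviation "mass u v \<equiv> sum (p u) {y\<in>V. G u y \<and> G y v}"

lemma N_pos: "0 < N"
  by (simp add: ncodes_def)

lemma code_subset: "j < N \<Longrightarrow> set_decode j \<subseteq> {..<Suc k}"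
  unfolding ncodes_def by (rule set_decode_subset_lessThan)

lemma mass_nonneg: "0 \<le> mass u v"
  by (simp add: sum_nonneg parity_weight_nonneg)

lemma mass_Xv_Lv:
  assumes "i < mval k" "l < N" "set_decode l \<noteq> {}"
  shows "1 \<le> mass (Xv i) (Lv l)"
proof -
  obtain c where c: "c \<in> set_decode l" using assms(3) by blast
  let ?J = "{j\<in>{..<N}. odd (card (set_decode j \<inter> set_decode l))}"
  have "2 * card ?J = N"
    using card_codes_odd_Int[OF code_subset[OF assms(2)] c] by (simp add: ncodes_def)
  then have "real (card ?J) * (2 / N) = 1"
    using N_pos by (simp add: field_simps flip: of_nat_mult)
  moreover have "card ?J * (2 / N) \<le> mass (Xv i) (Lv l)"
    by (rule card_mult_le_sum[where g = "Rv i"])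
      (use assms ncodes_le in \<open>auto simp: finite_Gverts parity_weight_nonneg Int_commute inj_on_def\<close>)
  ultimately show ?thesis by linarith
qed

lemma mass_Lv_Lv:
  assumes "l < N" "l' < N" "set_decode l \<noteq> {}" "set_decode l' \<noteq> {}"
  shows "1 / 2 \<le> mass (Lv l) (Lv l')"
proof -
  let ?J = "{j\<in>{..<N}. odd (card (set_decode j \<inter> set_decode l)) \<and>
                        odd (card (set_decode j \<inter> set_decode l'))}"
  have "N \<le> 4 * card ?J"
    using card_codes_odd_Int_pair[OF code_subset[OF assms(1)] code_subset[OF assms(2)] assms(3,4)]
    by (simp add: ncodes_def)
  then have "1 / 2 \<le> real (card ?J) * (2 / N)"
    using N_pos by (simp add: field_simps flip: of_nat_mult)
  moreover have "card ?J * (2 / N) \<le> mass (Lv l) (Lv l')"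
    by (rule card_mult_le_sum[where g = "Rv 0"])
      (use assms ncodes_le k_pos in \<open>auto simp: finite_Gverts parity_weight_nonneg Int_commute mval_def inj_on_def\<close>)
  ultimately show ?thesis by linarith
qed

lemma mass_Rv_Rv:
  assumes "i < mval k" "i' < mval k" "j < N" "j' < N" "set_decode j \<noteq> {}" "set_decode j' \<noteq> {}"
  shows "1 / 2 \<le> mass (Rv i j) (Rv i' j')"
proof -
  let ?J = "{l\<in>{..<N}. odd (card (set_decode l \<inter> set_decode j)) \<and>
                        odd (card (set_decode l \<inter> set_decode j'))}"
  have "N \<le> 4 * card ?J"
    using card_codes_odd_Int_pair[OF code_subset[OF assms(3)] code_subset[OF assms(4)] assms(5,6)]
    by (simp add: ncodes_def)
  then have "1 / 2 \<le> real (card ?J) * (2 / N)"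
    using N_pos by (simp add: field_simps flip: of_nat_mult)
  moreover have "card ?J * (2 / N) \<le> mass (Rv i j) (Rv i' j')"
    by (rule card_mult_le_sum[where g = Lv])
      (use assms ncodes_le in \<open>auto simp: finite_Gverts parity_weight_nonneg inj_on_def\<close>)
  ultimately show ?thesis by linarith
qed

lemma mass_Rv_Rv_same_part:
  assumes "i < mval k" "j < a" "j' < a"
  shows "1 \<le> mass (Rv i j) (Rv i j')"
  using card_mult_le_sum[of _ Xv "{i}" "p (Rv i j)" 1] assms
  by (simp add: finite_Gverts parity_weight_nonneg)

lemma mass_dist_2:
  assumes "u \<in> V" "v \<in> V" "dist_is G u v 2"
  shows "1 \<le> mass u v + mass v u"
proof -
  obtain w where uv: "u \<noteq> v" and uw: "G u w" and wv: "G w v"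
    using assms(3) by (auto simp: dist_is_2_iff)
  have nonneg: "0 \<le> mass u v" "0 \<le> mass v u"
    by (rule mass_nonneg)+
  show ?thesis
  proof (cases w)
    case (Lv l)
    then obtain i j i' j' where uv_R: "u = Rv i j" "v = Rv i' j'"
      using uw wv by (cases u; cases v) auto
    with uw wv Lv have "set_decode j \<noteq> {}" "set_decode j' \<noteq> {}"
      by auto
    then show ?thesis
      using uw wv Lv uv_R mass_Rv_Rv[of i i' j j'] mass_Rv_Rv[of i' i j' j] by auto
  next
    case (Xv i)
    then obtain j j' where "u = Rv i j" "v = Rv i j'"
      using uw wv by (cases u; cases v) auto
    then show ?thesis
      using assms(1,2) mass_Rv_Rv_same_part[of i j j'] nonneg by auto
  next
    case (Rv i j)
    then consider l where "u = Xv i" "v = Lv l" | l where "u = Lv l" "v = Xv i"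
      | l l' where "u = Lv l" "v = Lv l'"
      using uw wv uv by (cases u; cases v) auto
    then show ?thesis
    proof cases
      case 1
      with wv Rv have "set_decode l \<noteq> {}" by auto
      with 1 show ?thesis using wv Rv mass_Xv_Lv[of i l] nonneg by auto
    next
      case 2
      with uw Rv have "set_decode l \<noteq> {}" by auto
      with 2 show ?thesis using uw Rv mass_Xv_Lv[of i l] nonneg by auto
    next
      case 3
      with uw wv Rv have "set_decode l \<noteq> {}" "set_decode l' \<noteq> {}" by auto
      with 3 show ?thesis using uw wv Rv mass_Lv_Lv[of l l'] mass_Lv_Lv[of l' l] by auto
    qed
  qed
qed

lemma frac_guidance: "frac_guidance V G 2 p"
  unfolding frac_guidance_def frac_orientation_def
proof (intro conjI allI impI ballI)
  fix u v l assume "u \<in> V" "v \<in> V" and l: "dist_is G u v l \<and> 2 \<le> l \<and> l \<le> 2"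
  then have "l = 2" "1 \<le> mass u v + mass v u"
    using mass_dist_2 by auto
  then show "1 \<le> sum (p u) (Gamma V G u v l) + sum (p v) (Gamma V G v u l)"
    by (simp add: Gamma_2 Gadj_irrefl)
qed (rule parity_weight_nonneg)

lemma frac_max_outdeg: "frac_max_outdeg_le V G p 3"
  unfolding frac_max_outdeg_le_def
proof
  fix u assume "u \<in> V"
  let ?A = "{v\<in>V. G u v}"
  have fin: "finite ?A" by (simp add: finite_Gverts)
  have two: "card (f ` {..<N}) * (2 / N) = 2" if "inj f" for f :: "nat \<Rightarrow> vtx"
    using that N_pos by (simp add: card_image inj_on_subset)
  show "sum (p u) ?A \<le> 3"
  proof (cases u)
    case (Xv i)
    have "sum (p u) ?A \<le> card (Rv i ` {..<N}) * (2 / N)"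
      by (rule sum_le_card_mult) (use Xv fin in \<open>auto simp: Gadj_Xv_iff\<close>)
    then show ?thesis using two[of "Rv i"] by (simp add: inj_def)
  next
    case (Lv l)
    have "sum (p u) ?A \<le> card (Rv 0 ` {..<N}) * (2 / N)"
      by (rule sum_le_card_mult) (use Lv fin in \<open>auto simp: Gadj_Lv_iff\<close>)
    then show ?thesis using two[of "Rv 0"] by (simp add: inj_def)
  next
    case (Rv i j)
    have "Xv i \<in> ?A" using Rv \<open>u \<in> V\<close> by simp
    then have "sum (p u) ?A = p u (Xv i) + sum (p u) (?A - {Xv i})"
      by (rule sum.remove[OF fin])
    also have "sum (p u) (?A - {Xv i}) \<le> card (Lv ` {..<N}) * (2 / N)"
      by (rule sum_le_card_mult) (use Rv fin in \<open>auto elim: Gadj.elims\<close>)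
    finally show ?thesis using Rv two[of Lv] by (simp add: inj_def)
  qed
qed

lemma dist_2_Xv_Lv:
  assumes "i < mval k" "l < N" "c \<in> set_decode l"
  shows "dist_is G (Xv i) (Lv l) 2"
proof -
  define j where "j = set_encode {c}"
  have "set_decode j = {c}" unfolding j_def by (rule set_encode_inverse) simp
  have "{c} \<subseteq> {..<Suc k}" using code_subset[OF assms(2)] assms(3) by auto
  then have "j < N" unfolding j_def ncodes_def by (rule set_encode_less_power)
  then have "G (Xv i) (Rv i j)" "G (Rv i j) (Lv l)"
    using assms ncodes_le \<open>set_decode j = {c}\<close> by auto
  then have "\<exists>w. G (Xv i) w \<and> G w (Lv l)" by blast
  then show ?thesis by (simp add: dist_is_2_iff)
qed

lemma ex_code_even_Int_out_arcs:
  assumes po: "partial_orientation V G H" and deg: "max_outdeg_le V H k" and i: "i < mval k"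
  obtains l where "l \<in> {1..<N}"
    "\<And>j. (Xv i, Rv i j) \<in> H \<Longrightarrow> even (card (set_decode l \<inter> set_decode j))"
proof -
  let ?J = "{j. (Xv i, Rv i j) \<in> H}"
  have fin: "finite {y. (Xv i, y) \<in> H}" using po finite_Gverts by (rule finite_out_arcs)
  then have finJ: "finite ?J"
    using finite_vimageI[OF fin, of "Rv i"] by (simp add: inj_def vimage_def)
  then have "finite (set_decode ` ?J)" by simp
  moreover have "card (set_decode ` ?J) < card {..<Suc k}"
  proof -
    have "card (set_decode ` ?J) \<le> card ?J" using finJ by (rule card_image_le)
    also have "\<dots> \<le> card {y. (Xv i, y) \<in> H}"
      using fin by (intro card_inj_on_le[where f = "Rv i"]) (auto simp: inj_on_def)
    also have "\<dots> \<le> k" using deg i by (simp add: max_outdeg_le_def)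
    finally show ?thesis by simp
  qed
  ultimately obtain C where C: "C \<subseteq> {..<Suc k}" "C \<noteq> {}"
      "\<forall>B\<in>set_decode ` ?J. even (card (C \<inter> B))"
    by (rule ex_nonempty_even_Int_all[OF finite_lessThan])
  define l where "l = set_encode C"
  have l: "l < N" "set_decode l = C"
    unfolding l_def ncodes_def using C(1) finite_subset[OF C(1)]
    by (simp_all only: set_encode_less_power set_encode_inverse finite_lessThan)
  show ?thesis
  proof (rule that)
    have "l \<noteq> 0" using l(2) C(2) set_decode_eq_empty_iff[of l] by simp
    with l(1) show "l \<in> {1..<N}" by simp
  next
    fix j assume "(Xv i, Rv i j) \<in> H"
    then show "even (card (set_decode l \<inter> set_decode j))" using C(3) l(2) by blast
  qed
qed

lemma weak_guidance_arc_into_part: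
  assumes H: "weak_guidance V G 2 H" "max_outdeg_le V H k" and i: "i < mval k"
  obtains l j where "l \<in> {1..<N}" "(Lv l, Rv i j) \<in> H"
proof -
  have po: "partial_orientation V G H" using H(1) by (simp add: weak_guidance_def)
  obtain l where l: "l \<in> {1..<N}"
    and even: "\<And>j. (Xv i, Rv i j) \<in> H \<Longrightarrow> even (card (set_decode l \<inter> set_decode j))"
    using ex_code_even_Int_out_arcs[OF po H(2) i] by blast
  have "set_decode l \<noteq> {}" using l by (simp add: set_decode_eq_empty_iff)
  then obtain c where "c \<in> set_decode l" by blast
  with i l have "dist_is G (Xv i) (Lv l) 2" by (intro dist_2_Xv_Lv) auto
  moreover have "Xv i \<in> V" "Lv l \<in> V" using i l ncodes_le by auto
  ultimately consider x where "(Xv i, x) \<in> H" "G x (Lv l)" | y where "(Lv l, y) \<in> H" "G (Xv i) y"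
    using weak_guidance_dist_2[OF H(1)] by blast
  then show ?thesis
  proof cases
    case 1
    then have "G (Xv i) x" using po by (auto simp: partial_orientation_def)
    then obtain j where "x = Rv i j" by (auto simp: Gadj_Xv_iff)
    with 1 even[of j] show ?thesis by auto
  next
    case 2
    then obtain j where "y = Rv i j" by (auto simp: Gadj_Xv_iff)
    with 2 l show ?thesis using that by blast
  qed
qed

lemma no_weak_guidance: "\<not> (\<exists>H. weak_guidance V G 2 H \<and> max_outdeg_le V H k)"
proof
  assume "\<exists>H. weak_guidance V G 2 H \<and> max_outdeg_le V H k"
  then obtain H where H: "weak_guidance V G 2 H" "max_outdeg_le V H k" by blast
  have po: "partial_orientation V G H" using H(1) by (simp add: weak_guidance_def)
  have "\<forall>i<mval k. \<exists>l j. l \<in> {1..<N} \<and> (Lv l, Rv i j) \<in> H"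
    using weak_guidance_arc_into_part[OF H] by metis
  then obtain l j where lj: "\<And>i. i < mval k \<Longrightarrow> l i \<in> {1..<N} \<and> (Lv (l i), Rv i (j i)) \<in> H"
    by metis
  let ?S = "Lv ` {1..<N}"
  have "finite H"
    by (rule finite_subset[of _ "V \<times> V"]) (use po in \<open>auto simp: partial_orientation_def finite_Gverts\<close>)
  then have "card {..<mval k} \<le> card (H \<inter> ?S \<times> UNIV)"
    by (intro card_inj_on_le[where f = "\<lambda>i. (Lv (l i), Rv i (j i))"]) (use lj in \<open>auto simp: inj_on_def\<close>)
  also have "\<dots> \<le> card ?S * k"
    by (rule card_arcs_from_le[OF po finite_Gverts H(2)]) (use ncodes_le in auto)
  also have "card ?S = N - 1" by (simp add: card_image inj_on_def)
  finally have "k * N \<le> (N - 1) * k" by (simp add: mval_def ncodes_def)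
  then show False using k_pos N_pos by (simp add: diff_mult_distrib mult.commute)
qed

lemma parity_edges_subset: "parity_edges k \<subseteq> Lset a \<times> Rset a k"
  using ncodes_le by (auto simp: parity_edges_def Lset_def Rset_def)

end

lemma set_pmf_edge_dist: "set_pmf (edge_dist a k) = Pow (Lset a \<times> Rset a k)"
  unfolding edge_dist_def by (rule set_pmf_of_set) (auto simp: Lset_def Rset_def)

lemma ncodes_le_of_ln:
  assumes "128 \<le> a" "real k \<le> ln (real a)"
  shows "ncodes k \<le> a"
proof (cases "k \<le> 6")
  case True
  then have "ncodes k \<le> 2 ^ 7" unfolding ncodes_def by (intro power_increasing) auto
  with assms(1) show ?thesis by simp
next
  case False
  have "(1 + real k / real (2 * k)) ^ (2 * k) \<le> exp (real k)"
    by (rule exp_ge_one_plus_x_over_n_power_n) (use False in auto)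
  moreover have "(1 + real k / real (2 * k)) ^ (2 * k) = (9 / 4) ^ k"
  proof -
    have "1 + real k / real (2 * k) = 3 / 2" using False by (simp add: field_simps)
    then show ?thesis by (simp add: power_mult power2_eq_square)
  qed
  moreover have "exp (real k) \<le> real a"
    using assms exp_le_cancel_iff[of "real k" "ln (real a)"] by simp
  moreover have "2 * 2 ^ k \<le> (9 / 8 :: real) ^ k * 2 ^ k"
  proof -
    have "(2::real) \<le> (9 / 8) ^ 6" by (simp add: power_numeral_reduce)
    also have "\<dots> \<le> (9 / 8) ^ k" using False by (intro power_increasing) auto
    finally show ?thesis by simp
  qed
  ultimately have "real (ncodes k) \<le> real a"
    by (simp add: ncodes_def power_mult_distrib[symmetric])
  then show ?thesis by simp
qed

theorem lemma18:
  shows "\<exists>a0::nat. \<forall>a k. a \<ge> a0 \<and> 0 < k \<and> real k \<le> ln (real a) \<longrightarrow>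
    measure_pmf.prob (edge_dist a k)
      {E. (\<exists>p. frac_guidance (Gverts a k) (Gadj a k E) 2 p
               \<and> frac_max_outdeg_le (Gverts a k) (Gadj a k E) p 3)
        \<and> \<not> (\<exists>H. weak_guidance (Gverts a k) (Gadj a k E) 2 H
               \<and> max_outdeg_le (Gverts a k) H k)} > 0"
proof (intro exI[of _ 128] allI impI, goal_cases)
  case (1 a k)
  then interpret parity_graph a k
    by unfold_locales (auto intro: ncodes_le_of_ln)
  show ?case
    by (rule measure_pmf_posI[where x = "parity_edges k"])
      (use frac_guidance frac_max_outdeg no_weak_guidance parity_edges_subset
        in \<open>auto simp: set_pmf_edge_dist\<close>)
qed

end
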